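(* Let $\mathbf Y_n=(\mathbf y_1,\dots,\mathbf y_n)=(y_{ij})_{n\times n}$ have i.i.d. $N(0,1)$ entries, and let $\boldsymbol\Gamma_n=(\boldsymbol\gamma_1,\dots,\boldsymbol\gamma_n)=(\gamma_{ij})$ be obtained by Gram–Schmidt: $\mathbf w_1=\mathbf y_1$, $\boldsymbol\gamma_1=\mathbf w_1/\|\mathbf w_1\|$, and $\mathbf w_k=\mathbf y_k-\sum_{i<k}\langle\mathbf y_k,\boldsymbol\gamma_i\rangle\boldsymbol\gamma_i$, $\boldsymbol\gamma_k=\mathbf w_k/\|\mathbf w_k\|$ for $2\le k\le n$. For $1\le p,q\le n$ let $\boldsymbol\Gamma_{p\times q}=(\gamma_{ij})_{i\le p,j\le q}$ and $\mathbf Y_{p\times q}=(y_{ij})_{i\le p,j\le q}$. Then for every $n\ge2$ and all $1\le p,q\le n$, $$\mathbb E\sum_{i=1}^p\sum_{j=1}^q(\sqrt n\gamma_{ij}-y_{ij})^2\le\frac{24pq^2}{n}.$$ *)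

theory Defs
  imports "HOL-Probability.Probability"
begin

text \<open>Vectors in R^n are functions nat => real, used on indices 1..n.
  An n x n matrix Y is a function Y i j (row i, column j), 1 <= i,j <= n.\<close>

definition inner_n :: "nat \<Rightarrow> (nat \<Rightarrow> real) \<Rightarrow> (nat \<Rightarrow> real) \<Rightarrow> real" where
  "inner_n n u v = (\<Sum>i=1..n. u i * v i)"

definition norm_n :: "nat \<Rightarrow> (nat \<Rightarrow> real) \<Rightarrow> real" where
  "norm_n n u = sqrt (inner_n n u u)"

definition col :: "(nat \<Rightarrow> nat \<Rightarrow> real) \<Rightarrow> nat \<Rightarrow> (nat \<Rightarrow> real)" where
  "col Y k = (\<lambda>i. Y i k)"

primrec gs_list :: "nat \<Rightarrow> (nat \<Rightarrow> nat \<Rightarrow> real) \<Rightarrow> nat \<Rightarrow> (nat \<Rightarrow> real) list" where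
  "gs_list n Y 0 = []"
| "gs_list n Y (Suc k) =
     (let G = gs_list n Y k;
          w = (\<lambda>i. Y i (Suc k) - (\<Sum>g\<leftarrow>G. inner_n n (col Y (Suc k)) g * g i))
      in G @ [(\<lambda>i. w i / norm_n n w)])"

definition gs_gamma :: "nat \<Rightarrow> (nat \<Rightarrow> nat \<Rightarrow> real) \<Rightarrow> nat \<Rightarrow> nat \<Rightarrow> real" where
  "gs_gamma n Y i j = (gs_list n Y j ! (j - 1)) i"

definition gauss_matrix_space :: "nat \<Rightarrow> ((nat \<times> nat) \<Rightarrow> real) measure" where
  "gauss_matrix_space n =
     (\<Pi>\<^sub>M ij\<in>{1..n} \<times> {1..n}. density lborel std_normal_density)"

end

theory Submission
  imports Defs
begin

text \<open>Fix a column \<open>j = k + 1\<close> with entries \<open>y\<close>, let \<open>w\<close> be its Gram--Schmidt residual and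
  \<open>S = \<Sum>\<^sub>l\<^sub><\<^sub>j \<langle>y, \<gamma>\<^sub>l\<rangle>\<^sup>2\<close>. Since \<open>y\<close> is \<open>w\<close> plus an orthogonal projection,
  \<open>\<parallel>\<surd>n \<gamma>\<^sub>j - y\<parallel>\<^sup>2 \<le> (\<surd>n - \<parallel>w\<parallel>)\<^sup>2 + S \<le> 2 (n - \<parallel>y\<parallel>\<^sup>2)\<^sup>2 / n + 3 S\<close>.
  The vectors \<open>\<gamma>\<^sub>l\<close>, \<open>l < j\<close>, depend only on the other columns and have norm at most 1, so
  \<open>E \<langle>y, \<gamma>\<^sub>l\<rangle>\<^sup>2 \<le> 1\<close>, while \<open>E (n - \<parallel>y\<parallel>\<^sup>2)\<^sup>2 = 2n\<close>; hence column \<open>j\<close> has expected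
  squared error at most \<open>3j + 1\<close>. Permuting rows preserves the law of the matrix and permutes
  the entries of every \<open>\<gamma>\<^sub>l\<close>, so each of the \<open>n\<close> rows carries the same share
  \<open>(3j + 1) / n\<close>, and summing over \<open>i \<le> p\<close>, \<open>j \<le> q\<close> gives at most \<open>4 p q\<^sup>2 / n\<close>.\<close>

section \<open>Gram--Schmidt vectors\<close>

definition gs_vec :: "nat \<Rightarrow> (nat \<Rightarrow> nat \<Rightarrow> real) \<Rightarrow> nat \<Rightarrow> nat \<Rightarrow> real" where
  "gs_vec n Y j = gs_list n Y j ! (j - 1)"

text \<open>\<open>gs_residual n Y k\<close> is the residual \<open>w\<^sub>k\<^sub>+\<^sub>1\<close> of column \<open>k + 1\<close>.\<close>

definition gs_residual :: "nat \<Rightarrow> (nat \<Rightarrow> nat \<Rightarrow> real) \<Rightarrow> nat \<Rightarrow> nat \<Rightarrow> real" where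
  "gs_residual n Y k =
     (\<lambda>i. Y i (Suc k) - (\<Sum>l=1..k. inner_n n (col Y (Suc k)) (gs_vec n Y l) * gs_vec n Y l i))"

lemma length_gs_list [simp]: "length (gs_list n Y k) = k"
  by (induction k) (auto simp: Let_def)

lemma gs_list_eq_map: "gs_list n Y k = map (gs_vec n Y) [1..<Suc k]"
proof (induction k)
  case 0
  then show ?case by simp
next
  case (Suc k)
  have "gs_list n Y (Suc k) = gs_list n Y k @ [gs_vec n Y (Suc k)]"
    by (simp add: gs_vec_def Let_def nth_append)
  with Suc show ?case by (simp del: upt_Suc add: upt_Suc_append)
qed

lemma gs_gamma_eq_gs_vec: "gs_gamma n Y i j = gs_vec n Y j i"
  by (simp add: gs_gamma_def gs_vec_def)

lemma gs_vec_Suc: "gs_vec n Y (Suc k) = (\<lambda>i. gs_residual n Y k i / norm_n n (gs_residual n Y k))"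
proof -
  have "(\<Sum>g\<leftarrow>gs_list n Y k. inner_n n (col Y (Suc k)) g * g i)
      = (\<Sum>l=1..k. inner_n n (col Y (Suc k)) (gs_vec n Y l) * gs_vec n Y l i)" for i
    unfolding gs_list_eq_map map_map
    by (simp del: upt_Suc add: sum_set_upt_conv_sum_list_nat[symmetric]
        atLeastLessThanSuc_atLeastAtMost o_def)
  then show ?thesis
    by (simp add: gs_vec_def gs_residual_def Let_def nth_append)
qed

lemma inner_n_commute: "inner_n n u v = inner_n n v u"
  unfolding inner_n_def by (simp add: mult.commute)

lemma inner_n_cong:
  "(\<And>i. i \<in> {1..n} \<Longrightarrow> u i = u' i) \<Longrightarrow> (\<And>i. i \<in> {1..n} \<Longrightarrow> v i = v' i) \<Longrightarrow>
   inner_n n u v = inner_n n u' v'"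
  unfolding inner_n_def by (intro sum.cong) auto

lemma inner_n_zero_right: "(\<And>i. i \<in> {1..n} \<Longrightarrow> v i = 0) \<Longrightarrow> inner_n n u v = 0"
  unfolding inner_n_def by simp

lemma inner_n_self_nonneg: "0 \<le> inner_n n u u"
  unfolding inner_n_def by (simp add: sum_nonneg)

lemma inner_n_add_left: "inner_n n (\<lambda>i. u i + v i) w = inner_n n u w + inner_n n v w"
  unfolding inner_n_def by (simp add: sum.distrib algebra_simps)

lemma inner_n_divide_left: "inner_n n (\<lambda>i. u i / r) v = inner_n n u v / r"
  unfolding inner_n_def by (simp add: sum_divide_distrib)

lemma inner_n_diff_sum_left:
  "inner_n n (\<lambda>i. u i - (\<Sum>m\<in>S. c m * g m i)) v = inner_n n u v - (\<Sum>m\<in>S. c m * inner_n n (g m) v)"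
  unfolding inner_n_def
  by (simp add: left_diff_distrib sum_subtractf sum_distrib_left sum_distrib_right
      sum.swap[of _ S] mult.assoc)

lemma inner_n_sum_right:
  "inner_n n u (\<lambda>i. \<Sum>m\<in>S. c m * g m i) = (\<Sum>m\<in>S. c m * inner_n n u (g m))"
  unfolding inner_n_def
  by (simp add: sum_distrib_left sum.swap[of _ S] mult.assoc mult.left_commute)

lemma borel_measurable_inner_n:
  assumes "\<And>i. (\<lambda>x. u x i) \<in> borel_measurable M" and "\<And>i. (\<lambda>x. v x i) \<in> borel_measurable M"
  shows "(\<lambda>x. inner_n n (u x) (v x)) \<in> borel_measurable M"
  unfolding inner_n_def by (intro borel_measurable_sum borel_measurable_times assms)

lemma inner_n_reindex:
  assumes "bij_betw \<pi> {1..n} {1..n}"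
  shows "inner_n n (\<lambda>i. u (\<pi> i)) (\<lambda>i. v (\<pi> i)) = inner_n n u v"
  unfolding inner_n_def using sum.reindex_bij_betw[OF assms, of "\<lambda>i. u i * v i"] by simp

lemma sum_sq_diff_scaled:
  "(\<Sum>i=1..n. (a * w i - y i)\<^sup>2) = a\<^sup>2 * inner_n n w w - 2 * a * inner_n n w y + inner_n n y y"
  unfolding inner_n_def
  by (simp add: power2_diff sum.distrib sum_subtractf sum_distrib_left power_mult_distrib
      power2_eq_square algebra_simps)

text \<open>Normalising the zero vector gives the zero vector (\<open>x / 0 = 0\<close>), so Gram--Schmidt
  vectors are only guaranteed to be unit vectors or zero.\<close>

definition unit_or_zero :: "nat \<Rightarrow> (nat \<Rightarrow> real) \<Rightarrow> bool" where
  "unit_or_zero n g \<longleftrightarrow> inner_n n g g = 1 \<or> (\<forall>i\<in>{1..n}. g i = 0)"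

lemma unit_or_zero_normalize: "unit_or_zero n (\<lambda>i. w i / norm_n n w)"
proof (cases "norm_n n w = 0")
  case True
  then show ?thesis by (simp add: unit_or_zero_def)
next
  case False
  have "inner_n n (\<lambda>i. w i / norm_n n w) (\<lambda>i. w i / norm_n n w) = inner_n n w w / (norm_n n w)\<^sup>2"
    unfolding inner_n_def by (simp add: sum_divide_distrib power2_eq_square)
  also have "\<dots> = 1"
    using False inner_n_self_nonneg[of n w] unfolding norm_n_def by simp
  finally show ?thesis by (simp add: unit_or_zero_def)
qed

lemma unit_or_zero_inner_self_le: "unit_or_zero n g \<Longrightarrow> inner_n n g g \<le> 1"
  unfolding unit_or_zero_def using inner_n_zero_right[of n g g] by auto

lemma unit_or_zero_coeff: "unit_or_zero n g \<Longrightarrow> inner_n n y g * inner_n n g g = inner_n n y g"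
  unfolding unit_or_zero_def using inner_n_zero_right[of n g y] by auto

lemma gs_residual_orthogonal_if_orthonormal:
  assumes orth: "\<And>j l. j \<in> {1..k} \<Longrightarrow> l \<in> {1..k} \<Longrightarrow> j \<noteq> l \<Longrightarrow>
      inner_n n (gs_vec n Y j) (gs_vec n Y l) = 0"
    and unit: "\<And>j. j \<in> {1..k} \<Longrightarrow> unit_or_zero n (gs_vec n Y j)"
    and l: "l \<in> {1..k}"
  shows "inner_n n (gs_residual n Y k) (gs_vec n Y l) = 0"
proof -
  let ?c = "\<lambda>m. inner_n n (col Y (Suc k)) (gs_vec n Y m)"
  have "inner_n n (gs_residual n Y k) (gs_vec n Y l)
      = ?c l - (\<Sum>m\<in>{1..k}. ?c m * inner_n n (gs_vec n Y m) (gs_vec n Y l))"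
    unfolding gs_residual_def by (subst inner_n_diff_sum_left) (simp add: col_def)
  also have "(\<Sum>m\<in>{1..k}. ?c m * inner_n n (gs_vec n Y m) (gs_vec n Y l))
      = ?c l * inner_n n (gs_vec n Y l) (gs_vec n Y l)"
    using l by (subst sum.remove[of _ l]) (auto intro!: sum.neutral simp: orth)
  finally show ?thesis using unit_or_zero_coeff[OF unit[OF l]] by simp
qed

lemma gs_vec_orthonormal_upto:
  "\<forall>j\<in>{1..k}. unit_or_zero n (gs_vec n Y j) \<and>
     (\<forall>l\<in>{1..k}. j \<noteq> l \<longrightarrow> inner_n n (gs_vec n Y j) (gs_vec n Y l) = 0)"
proof (induction k)
  case 0
  then show ?case by simp
next
  case (Suc k)
  then have orth: "\<And>j l. j \<in> {1..k} \<Longrightarrow> l \<in> {1..k} \<Longrightarrow> j \<noteq> l \<Longrightarrow>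
      inner_n n (gs_vec n Y j) (gs_vec n Y l) = 0"
    and unit: "\<And>j. j \<in> {1..k} \<Longrightarrow> unit_or_zero n (gs_vec n Y j)" by blast+
  have new_orth: "inner_n n (gs_vec n Y (Suc k)) (gs_vec n Y l) = 0" if "l \<in> {1..k}" for l
    unfolding gs_vec_Suc inner_n_divide_left
    using gs_residual_orthogonal_if_orthonormal[OF orth unit that] by simp
  have "unit_or_zero n (gs_vec n Y (Suc k))"
    unfolding gs_vec_Suc by (rule unit_or_zero_normalize)
  with orth unit new_orth show ?case
    by (auto simp: le_Suc_eq inner_n_commute[of n "gs_vec n Y (Suc k)"])
qed

lemma gs_vec_unit_or_zero: "1 \<le> j \<Longrightarrow> unit_or_zero n (gs_vec n Y j)"
  using gs_vec_orthonormal_upto[of j n Y] by auto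

lemma gs_vec_orthogonal:
  "1 \<le> j \<Longrightarrow> 1 \<le> l \<Longrightarrow> j \<noteq> l \<Longrightarrow> inner_n n (gs_vec n Y j) (gs_vec n Y l) = 0"
  using gs_vec_orthonormal_upto[of "max j l" n Y] by auto

lemma gs_residual_orthogonal:
  "l \<in> {1..k} \<Longrightarrow> inner_n n (gs_residual n Y k) (gs_vec n Y l) = 0"
  by (rule gs_residual_orthogonal_if_orthonormal) (auto intro: gs_vec_orthogonal gs_vec_unit_or_zero)

lemma sqrt_diff_sq_add_le:
  fixes n r S :: real
  assumes n: "0 < n" and r: "0 \<le> r" and S: "0 \<le> S"
  shows "(sqrt n - r)\<^sup>2 + S \<le> 2 * (n - (r\<^sup>2 + S))\<^sup>2 / n + 3 * S"
proof -
  define s where "s = sqrt (r\<^sup>2 + S)"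
  have s: "0 \<le> s" "s\<^sup>2 = r\<^sup>2 + S" "r \<le> s"
    using r S real_sqrt_le_mono[of "r\<^sup>2" "r\<^sup>2 + S"] by (auto simp: s_def)
  have sqrt_n: "sqrt n ^ 2 = n" using n by simp
  have "(sqrt n - r)\<^sup>2 \<le> 2 * (sqrt n - s)\<^sup>2 + 2 * (s - r)\<^sup>2"
    using zero_le_power2[of "(sqrt n - s) - (s - r)"] by (simp add: power2_eq_square algebra_simps)
  moreover have "(s - r)\<^sup>2 \<le> S"
    using s mult_right_mono[OF \<open>r \<le> s\<close> r] by (simp add: power2_eq_square algebra_simps)
  moreover have "(sqrt n - s)\<^sup>2 \<le> (n - s\<^sup>2)\<^sup>2 / n"
  proof -
    have "(n - s\<^sup>2)\<^sup>2 = (sqrt n - s)\<^sup>2 * (sqrt n + s)\<^sup>2"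
      using sqrt_n by (simp add: power2_eq_square algebra_simps)
    moreover have "n \<le> (sqrt n + s)\<^sup>2"
      using s sqrt_n power_mono[of "sqrt n" "sqrt n + s" 2] by simp
    ultimately have "(sqrt n - s)\<^sup>2 * n \<le> (n - s\<^sup>2)\<^sup>2"
      by (metis mult_left_mono zero_le_power2)
    then show ?thesis using n by (simp add: pos_le_divide_eq)
  qed
  ultimately show ?thesis using s S by simp
qed

lemma gs_column_pythagoras:
  fixes Y :: "nat \<Rightarrow> nat \<Rightarrow> real" and n k :: nat
  defines "y \<equiv> col Y (Suc k)" and "w \<equiv> gs_residual n Y k"
  shows "inner_n n y y = inner_n n w w + (\<Sum>l=1..k. (inner_n n y (gs_vec n Y l))\<^sup>2)"
    and "inner_n n w y = inner_n n w w"
proof -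
  let ?c = "\<lambda>m. inner_n n y (gs_vec n Y m)"
  define P where "P = (\<lambda>i. \<Sum>m\<in>{1..k}. ?c m * gs_vec n Y m i)"
  have y_eq: "y = (\<lambda>i. w i + P i)"
    by (simp add: w_def y_def gs_residual_def P_def col_def)
  have wP: "inner_n n w P = 0"
    unfolding P_def inner_n_sum_right w_def using gs_residual_orthogonal by simp
  have "inner_n n P P = (\<Sum>m\<in>{1..k}. ?c m * inner_n n P (gs_vec n Y m))"
    by (subst (2) P_def) (rule inner_n_sum_right)
  also have "\<dots> = (\<Sum>m\<in>{1..k}. (?c m)\<^sup>2)"
  proof (intro sum.cong refl)
    fix m assume m: "m \<in> {1..k}"
    have "inner_n n P (gs_vec n Y m) = ?c m"
      unfolding y_eq inner_n_add_left
      using gs_residual_orthogonal[OF m, of n Y] by (simp add: w_def)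
    then show "?c m * inner_n n P (gs_vec n Y m) = (?c m)\<^sup>2" by (simp add: power2_eq_square)
  qed
  finally have PP: "inner_n n P P = (\<Sum>l=1..k. (?c l)\<^sup>2)" .
  have wy: "inner_n n y w = inner_n n w w"
    unfolding y_eq inner_n_add_left using wP by (simp add: inner_n_commute[of n P])
  then show "inner_n n w y = inner_n n w w" by (simp add: inner_n_commute[of n y])
  have "inner_n n y P = inner_n n P P"
    unfolding y_eq inner_n_add_left using wP by simp
  then show "inner_n n y y = inner_n n w w + (\<Sum>l=1..k. (?c l)\<^sup>2)"
    using wy PP by (subst (2) y_eq) (simp add: inner_n_commute[of n y] inner_n_add_left[of n w P y])
qed

text \<open>Equality holds unless the residual vanishes, in which case \<open>gs_vec n Y (Suc k) = 0\<close>.\<close>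

lemma gs_column_sq_error_le_residual:
  "(\<Sum>i=1..n. (sqrt (real n) * gs_vec n Y (Suc k) i - Y i (Suc k))\<^sup>2)
     \<le> (sqrt (real n) - norm_n n (gs_residual n Y k))\<^sup>2
       + (\<Sum>l=1..k. (inner_n n (col Y (Suc k)) (gs_vec n Y l))\<^sup>2)"
proof -
  let ?y = "col Y (Suc k)" and ?w = "gs_residual n Y k"
  define r where "r = norm_n n ?w"
  have r: "0 \<le> r" "r\<^sup>2 = inner_n n ?w ?w"
    using inner_n_self_nonneg[of n ?w] by (simp_all add: r_def norm_n_def)
  have "(\<Sum>i=1..n. (sqrt (real n) * gs_vec n Y (Suc k) i - Y i (Suc k))\<^sup>2)
      = (\<Sum>i=1..n. ((sqrt (real n) / r) * ?w i - ?y i)\<^sup>2)"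
    by (simp add: gs_vec_Suc r_def col_def)
  also have "\<dots> = (sqrt n / r)\<^sup>2 * inner_n n ?w ?w - 2 * (sqrt n / r) * inner_n n ?w ?y
      + inner_n n ?y ?y"
    by (rule sum_sq_diff_scaled)
  also have "\<dots> \<le> (sqrt (real n) - r)\<^sup>2 + (\<Sum>l=1..k. (inner_n n ?y (gs_vec n Y l))\<^sup>2)"
  proof (cases "r = 0")
    case True
    then show ?thesis using r(2) gs_column_pythagoras(1)[of n Y k] by simp
  next
    case False
    have "(sqrt n / r)\<^sup>2 * r\<^sup>2 = n" "(sqrt n / r) * r\<^sup>2 = sqrt n * r"
      using False by (simp_all add: power2_eq_square field_simps)
    then show ?thesis
      using gs_column_pythagoras[of n Y k] unfolding r(2)[symmetric]
      by (simp add: power2_diff)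
  qed
  finally show ?thesis by (simp add: r_def)
qed

lemma gs_column_sq_error_le:
  assumes "1 \<le> n"
  shows "(\<Sum>i=1..n. (sqrt (real n) * gs_vec n Y (Suc k) i - Y i (Suc k))\<^sup>2)
     \<le> 2 * (real n - inner_n n (col Y (Suc k)) (col Y (Suc k)))\<^sup>2 / real n
        + 3 * (\<Sum>l=1..k. (inner_n n (col Y (Suc k)) (gs_vec n Y l))\<^sup>2)"
proof -
  let ?w = "gs_residual n Y k" and ?S = "\<Sum>l=1..k. (inner_n n (col Y (Suc k)) (gs_vec n Y l))\<^sup>2"
  have "(norm_n n ?w)\<^sup>2 = inner_n n ?w ?w"
    using inner_n_self_nonneg[of n ?w] by (simp add: norm_n_def)
  moreover have "(sqrt (real n) - norm_n n ?w)\<^sup>2 + ?S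
      \<le> 2 * (real n - ((norm_n n ?w)\<^sup>2 + ?S))\<^sup>2 / real n + 3 * ?S"
    using assms by (intro sqrt_diff_sq_add_le) (auto simp: norm_n_def inner_n_self_nonneg intro: sum_nonneg)
  ultimately show ?thesis
    using gs_column_sq_error_le_residual[of n Y k] unfolding gs_column_pythagoras(1) by simp
qed

lemma gs_vec_permute_rows:
  assumes \<pi>: "bij_betw \<pi> {1..n} {1..n}" and "1 \<le> l"
  shows "gs_vec n (\<lambda>a b. Y (\<pi> a) b) l = (\<lambda>a. gs_vec n Y l (\<pi> a))"
  using \<open>1 \<le> l\<close>
proof (induction l rule: less_induct)
  case (less l)
  then obtain k where l: "l = Suc k" by (cases l) auto
  let ?Y' = "\<lambda>a b. Y (\<pi> a) b"
  have residual: "gs_residual n ?Y' k = (\<lambda>a. gs_residual n Y k (\<pi> a))"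
    unfolding gs_residual_def using less.IH l
    by (intro ext arg_cong2[where f="(-)"] refl sum.cong)
      (auto simp: col_def inner_n_reindex[OF \<pi>, of "col Y (Suc k)", unfolded col_def])
  show ?case
    unfolding l gs_vec_Suc residual norm_n_def inner_n_reindex[OF \<pi>] ..
qed

lemma gs_vec_cong:
  assumes "\<And>a b. a \<in> {1..n} \<Longrightarrow> b \<in> {1..k} \<Longrightarrow> Y a b = Y' a b"
    and "1 \<le> l" "l \<le> k" "a \<in> {1..n}"
  shows "gs_vec n Y l a = gs_vec n Y' l a"
  using assms(2-)
proof (induction l arbitrary: a rule: less_induct)
  case (less l)
  then obtain m where l: "l = Suc m" by (cases l) auto
  have residual: "gs_residual n Y m a = gs_residual n Y' m a" if "a \<in> {1..n}" for a
    unfolding gs_residual_def using assms(1) less.IH less.prems(2) l that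
    by (intro arg_cong2[where f="(-)"] sum.cong refl arg_cong2[where f="(*)"] inner_n_cong)
      (auto simp: col_def)
  have "norm_n n (gs_residual n Y m) = norm_n n (gs_residual n Y' m)"
    unfolding norm_n_def by (intro arg_cong[where f=sqrt] inner_n_cong) (auto simp: residual)
  then show ?case
    unfolding l gs_vec_Suc using residual less.prems(3) by simp
qed

lemma borel_measurable_gs_vec:
  assumes "\<And>a b. (\<lambda>x. Y x a b) \<in> borel_measurable M" and "1 \<le> l"
  shows "(\<lambda>x. gs_vec n (Y x) l a) \<in> borel_measurable M"
  using \<open>1 \<le> l\<close>
proof (induction l arbitrary: a rule: less_induct)
  case (less l)
  then obtain k where l: "l = Suc k" by (cases l) auto
  have residual: "(\<lambda>x. gs_residual n (Y x) k a) \<in> borel_measurable M" for a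
    unfolding gs_residual_def inner_n_def col_def using less.IH l
    by (intro borel_measurable_diff borel_measurable_sum borel_measurable_times assms(1)) auto
  have "(\<lambda>x. norm_n n (gs_residual n (Y x) k)) \<in> borel_measurable M"
    unfolding norm_n_def inner_n_def
    by (intro borel_measurable_sqrt[THEN measurable_compose[rotated]] borel_measurable_sum
        borel_measurable_times residual)
  with residual show ?case
    unfolding l gs_vec_Suc by (intro borel_measurable_divide)
qed

section \<open>Moments of the standard normal distribution\<close>

definition std_normal :: "real measure" where
  "std_normal = density lborel std_normal_density"

lemma prob_space_std_normal: "prob_space std_normal"
  unfolding std_normal_def by (rule prob_space_normal_density) simp

lemma integrable_std_normal_power: "integrable std_normal (\<lambda>x. x ^ k)"
  unfolding std_normal_def
  by (subst integrable_density) (auto simp: normal_density_nonneg integrable_std_normal_moment)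

lemma integral_std_normal_power:
  "integral\<^sup>L std_normal (\<lambda>x. x ^ k) = integral\<^sup>L lborel (\<lambda>x. std_normal_density x * x ^ k)"
  unfolding std_normal_def by (subst integral_density) (auto simp: normal_density_nonneg)

interpretation std_normal_product: product_sigma_finite "\<lambda>_::'i. std_normal"
  unfolding product_sigma_finite_def
  using prob_space_imp_sigma_finite[OF prob_space_std_normal] by simp

lemma
  fixes J :: "'i set" and k :: "'i \<Rightarrow> nat"
  assumes "finite J"
  shows integrable_PiM_std_normal_monomial:
      "integrable (PiM J (\<lambda>_. std_normal)) (\<lambda>x. \<Prod>a\<in>J. x a ^ k a)"
    and integral_PiM_std_normal_monomial:
      "integral\<^sup>L (PiM J (\<lambda>_. std_normal)) (\<lambda>x. \<Prod>a\<in>J. x a ^ k a)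
         = (\<Prod>a\<in>J. integral\<^sup>L std_normal (\<lambda>x. x ^ k a))"
  using std_normal_product.product_integrable_prod[OF assms, of "\<lambda>a x. x ^ k a"]
    std_normal_product.product_integral_prod[OF assms, of "\<lambda>a x. x ^ k a"]
  by (simp_all add: integrable_std_normal_power)

lemma
  fixes J :: "'i set"
  assumes J: "finite J" "a \<in> J" "b \<in> J"
  shows integrable_PiM_std_normal_pair:
      "integrable (PiM J (\<lambda>_. std_normal)) (\<lambda>x. x a ^ m * x b ^ m)" (is "integrable ?M ?f")
    and integral_PiM_std_normal_pair:
      "integral\<^sup>L (PiM J (\<lambda>_. std_normal)) (\<lambda>x. x a ^ m * x b ^ m)
         = (if a = b then integral\<^sup>L std_normal (\<lambda>x. x ^ (2 * m))
            else (integral\<^sup>L std_normal (\<lambda>x. x ^ m))\<^sup>2)" (is "_ = ?moment")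
proof -
  define k where "k c = (if c = a then m else 0) + (if c = b then m else 0)" for c
  have monomial: "(\<Prod>c\<in>J. x c ^ k c) = x a ^ m * x b ^ m" for x :: "'i \<Rightarrow> real"
    using J by (simp add: k_def power_add prod.distrib if_distrib[of "\<lambda>e. x _ ^ e"] prod.delta
        cong: if_cong)
  have "(\<Prod>c\<in>J. integral\<^sup>L std_normal (\<lambda>x. x ^ k c)) = ?moment"
  proof -
    have "integral\<^sup>L std_normal (\<lambda>x. x ^ 0) = 1"
      by (simp add: prob_space.prob_space[OF prob_space_std_normal])
    then have "(\<Prod>c\<in>J. integral\<^sup>L std_normal (\<lambda>x. x ^ k c))
        = (\<Prod>c\<in>{a, b}. integral\<^sup>L std_normal (\<lambda>x. x ^ k c))"
      using J by (intro prod.mono_neutral_right) (auto simp: k_def)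
    then show ?thesis by (cases "a = b") (simp_all add: k_def power2_eq_square mult_2)
  qed
  with integrable_PiM_std_normal_monomial[OF J(1), of k]
    integral_PiM_std_normal_monomial[OF J(1), of k]
  show "integrable ?M ?f" and "integral\<^sup>L ?M ?f = ?moment"
    by (simp_all add: monomial)
qed

lemma std_normal_moments:
  "integral\<^sup>L std_normal (\<lambda>x. x) = 0"
  "integral\<^sup>L std_normal (\<lambda>x. x\<^sup>2) = 1"
  "integral\<^sup>L std_normal (\<lambda>x. x ^ 4) = 3"
  using integral_std_normal_power[of 1] integral_std_normal_moment_odd[of 0]
    integral_std_normal_power[of 2] integral_std_normal_moment_even[of 1]
    integral_std_normal_power[of 4] integral_std_normal_moment_even[of 2]
  by (simp_all add: fact_numeral)

lemma
  fixes J :: "'i set"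
  assumes "finite J" "a \<in> J" "b \<in> J"
  shows integrable_PiM_std_normal_mult: "integrable (PiM J (\<lambda>_. std_normal)) (\<lambda>x. x a * x b)"
    and integral_PiM_std_normal_mult:
      "integral\<^sup>L (PiM J (\<lambda>_. std_normal)) (\<lambda>x. x a * x b) = (if a = b then 1 else 0)"
  using integrable_PiM_std_normal_pair[OF assms, of 1] integral_PiM_std_normal_pair[OF assms, of 1]
  by (simp_all add: std_normal_moments)

lemma
  fixes J :: "'i set"
  assumes "finite J" "a \<in> J" "b \<in> J"
  shows integrable_PiM_std_normal_sq_mult:
      "integrable (PiM J (\<lambda>_. std_normal)) (\<lambda>x. (x a)\<^sup>2 * (x b)\<^sup>2)"
    and integral_PiM_std_normal_sq_mult:
      "integral\<^sup>L (PiM J (\<lambda>_. std_normal)) (\<lambda>x. (x a)\<^sup>2 * (x b)\<^sup>2) = (if a = b then 3 else 1)"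
  using integrable_PiM_std_normal_pair[OF assms, of 2] integral_PiM_std_normal_pair[OF assms, of 2]
  by (simp_all add: std_normal_moments)

lemma nn_integral_PiM_std_normal_linear_sq:
  fixes J :: "'i set"
  assumes J: "finite J"
  shows "(\<integral>\<^sup>+ x. ennreal ((\<Sum>a\<in>J. c a * x a)\<^sup>2) \<partial>PiM J (\<lambda>_. std_normal))
    = ennreal (\<Sum>a\<in>J. (c a)\<^sup>2)"
proof -
  let ?M = "PiM J (\<lambda>_. std_normal)"
  have sq: "(\<Sum>a\<in>J. c a * x a)\<^sup>2 = (\<Sum>a\<in>J. \<Sum>b\<in>J. c a * c b * (x a * x b))" for x :: "'i \<Rightarrow> real"
    by (simp add: power2_eq_square sum_product algebra_simps)
  have int: "integrable ?M (\<lambda>x. \<Sum>a\<in>J. \<Sum>b\<in>J. c a * c b * (x a * x b))"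
    using J by (auto intro!: integrable_sum integrable_mult_right integrable_PiM_std_normal_mult)
  have "integral\<^sup>L ?M (\<lambda>x. \<Sum>a\<in>J. \<Sum>b\<in>J. c a * c b * (x a * x b))
      = (\<Sum>a\<in>J. \<Sum>b\<in>J. c a * c b * (if a = b then 1 else 0))"
    using J by (simp add: integral_sum integrable_sum integrable_PiM_std_normal_mult
        integral_PiM_std_normal_mult)
  also have "\<dots> = (\<Sum>a\<in>J. (c a)\<^sup>2)"
    using J by (simp add: power2_eq_square if_distrib cong: if_cong)
  finally have "integral\<^sup>L ?M (\<lambda>x. \<Sum>a\<in>J. \<Sum>b\<in>J. c a * c b * (x a * x b)) = (\<Sum>a\<in>J. (c a)\<^sup>2)" .
  moreover have "(\<integral>\<^sup>+ x. ennreal (\<Sum>a\<in>J. \<Sum>b\<in>J. c a * c b * (x a * x b)) \<partial>?M)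
      = ennreal (integral\<^sup>L ?M (\<lambda>x. \<Sum>a\<in>J. \<Sum>b\<in>J. c a * c b * (x a * x b)))"
    using int by (rule nn_integral_eq_integral) (simp flip: sq)
  ultimately show ?thesis by (simp only: sq)
qed

lemma nn_integral_PiM_std_normal_sum_sq_deviation:
  fixes J :: "'i set"
  assumes J: "finite J"
  shows "(\<integral>\<^sup>+ x. ennreal ((real (card J) - (\<Sum>a\<in>J. (x a)\<^sup>2))\<^sup>2) \<partial>PiM J (\<lambda>_. std_normal))
    = ennreal (2 * real (card J))"
proof -
  let ?M = "PiM J (\<lambda>_. std_normal)" and ?m = "real (card J)"
  interpret prob_space ?M by (intro prob_space_PiM prob_space_std_normal)
  define f where "f x = ?m\<^sup>2 - (\<Sum>a\<in>J. 2 * ?m * (x a)\<^sup>2) + (\<Sum>a\<in>J. \<Sum>b\<in>J. (x a)\<^sup>2 * (x b)\<^sup>2)"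
    for x :: "'i \<Rightarrow> real"
  have sq: "(?m - (\<Sum>a\<in>J. (x a)\<^sup>2))\<^sup>2 = f x" for x
    by (simp add: f_def power2_diff power2_eq_square[of "sum _ _"] sum_product sum_distrib_left
        algebra_simps)
  have int2: "integrable ?M (\<lambda>x. \<Sum>a\<in>J. 2 * ?m * (x a)\<^sup>2)"
    using integrable_PiM_std_normal_mult[OF J] by (auto simp: power2_eq_square)
  have int4: "integrable ?M (\<lambda>x. \<Sum>a\<in>J. \<Sum>b\<in>J. (x a)\<^sup>2 * (x b)\<^sup>2)"
    using integrable_PiM_std_normal_sq_mult[OF J] by auto
  have int: "integrable ?M f"
    unfolding f_def using int2 int4 by auto
  have E2: "integral\<^sup>L ?M (\<lambda>x. \<Sum>a\<in>J. 2 * ?m * (x a)\<^sup>2) = 2 * ?m * ?m"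
    using J by (simp add: integral_sum integrable_PiM_std_normal_mult integral_PiM_std_normal_mult
        power2_eq_square)
  have "(\<Sum>a\<in>J. \<Sum>b\<in>J. (if a = b then 3 else 1::real))
      = (\<Sum>a\<in>J. \<Sum>b\<in>J. 1 + (if a = b then 2 else 0))"
    by (intro sum.cong) auto
  also have "\<dots> = ?m * (?m + 2)"
    using J by (simp add: sum.distrib algebra_simps)
  finally have E4: "integral\<^sup>L ?M (\<lambda>x. \<Sum>a\<in>J. \<Sum>b\<in>J. (x a)\<^sup>2 * (x b)\<^sup>2) = ?m * (?m + 2)"
    using J by (simp add: integral_sum integrable_PiM_std_normal_sq_mult
        integral_PiM_std_normal_sq_mult)
  have "integral\<^sup>L ?M f = 2 * ?m"
    unfolding f_def using int2 int4 E2 E4 by (simp add: prob_space power2_eq_square algebra_simps)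
  moreover have "(\<integral>\<^sup>+ x. ennreal (f x) \<partial>?M) = ennreal (integral\<^sup>L ?M f)"
    using int by (rule nn_integral_eq_integral) (simp flip: sq)
  ultimately show ?thesis by (simp only: sq)
qed

section \<open>The Gaussian matrix\<close>

lemma gauss_matrix_space_eq: "gauss_matrix_space n = PiM ({1..n} \<times> {1..n}) (\<lambda>_. std_normal)"
  by (simp add: gauss_matrix_space_def std_normal_def)

lemma borel_measurable_PiM_std_normal_component:
  "(\<lambda>\<omega>. \<omega> x) \<in> borel_measurable (PiM I (\<lambda>_. std_normal))"
proof (cases "x \<in> I")
  case True
  then show ?thesis by (simp add: std_normal_def)
next
  case False
  then have "(\<lambda>\<omega>. \<omega> x) \<in> borel_measurable (PiM I (\<lambda>_. std_normal)) \<longleftrightarrow>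
      (\<lambda>_. undefined :: real) \<in> borel_measurable (PiM I (\<lambda>_. std_normal))"
    by (intro measurable_cong) (auto simp: space_PiM PiE_def extensional_def)
  then show ?thesis by simp
qed

definition gs_sq_error :: "nat \<Rightarrow> (nat \<times> nat \<Rightarrow> real) \<Rightarrow> nat \<Rightarrow> nat \<Rightarrow> real" where
  "gs_sq_error n \<omega> i j = (sqrt (real n) * gs_vec n (curry \<omega>) j i - \<omega> (i, j))\<^sup>2"

lemma gs_sq_error_nonneg: "0 \<le> gs_sq_error n \<omega> i j"
  by (simp add: gs_sq_error_def)

lemma borel_measurable_gs_sq_error:
  "1 \<le> j \<Longrightarrow> (\<lambda>\<omega>. gs_sq_error n \<omega> i j) \<in> borel_measurable (PiM I (\<lambda>_. std_normal))"
  unfolding gs_sq_error_def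
  by (intro borel_measurable_power borel_measurable_diff borel_measurable_times
      borel_measurable_gs_vec borel_measurable_PiM_std_normal_component)
    (auto intro: borel_measurable_PiM_std_normal_component)

definition permute_rows :: "nat \<Rightarrow> (nat \<Rightarrow> nat) \<Rightarrow> (nat \<times> nat \<Rightarrow> real) \<Rightarrow> nat \<times> nat \<Rightarrow> real"
  where "permute_rows n \<pi> \<omega> = (\<lambda>x\<in>{1..n} \<times> {1..n}. \<omega> (\<pi> (fst x), snd x))"

lemma
  assumes "\<pi> permutes {1..n}"
  shows distr_permute_rows:
      "distr (gauss_matrix_space n) (gauss_matrix_space n) (permute_rows n \<pi>) = gauss_matrix_space n"
    and measurable_permute_rows:
      "permute_rows n \<pi> \<in> gauss_matrix_space n \<rightarrow>\<^sub>M gauss_matrix_space n"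
proof -
  let ?I = "{1..n} \<times> {1..n}" and ?\<sigma> = "\<lambda>x. (\<pi> (fst x), snd x)"
  have in_rows: "\<pi> a \<in> {1..n}" if "a \<in> {1..n}" for a
    using permutes_in_image[OF assms] that by blast
  have inj: "inj_on ?\<sigma> ?I"
    using injD[OF permutes_inj[OF assms]] by (auto intro!: inj_onI)
  have maps: "?\<sigma> \<in> ?I \<rightarrow> ?I"
    using in_rows by (auto simp del: atLeastAtMost_iff)
  show "distr (gauss_matrix_space n) (gauss_matrix_space n) (permute_rows n \<pi>)
      = gauss_matrix_space n"
    unfolding gauss_matrix_space_eq permute_rows_def[abs_def]
    by (rule distr_PiM_reindex[OF prob_space_std_normal inj maps])
  show "permute_rows n \<pi> \<in> gauss_matrix_space n \<rightarrow>\<^sub>M gauss_matrix_space n"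
    unfolding gauss_matrix_space_eq permute_rows_def[abs_def]
    using maps by (intro measurable_restrict measurable_component_singleton)
      (simp only: Pi_iff)
qed

lemma curry_permute_rows:
  assumes "\<pi> permutes {1..n}" and "\<omega> \<in> space (gauss_matrix_space n)"
  shows "curry (permute_rows n \<pi> \<omega>) = (\<lambda>a b. curry \<omega> (\<pi> a) b)"
proof (intro ext)
  fix a b
  have "(\<pi> a, b) \<in> {1..n} \<times> {1..n} \<longleftrightarrow> (a, b) \<in> {1..n} \<times> {1..n}"
    using permutes_in_image[OF assms(1), of a] by (simp only: mem_Times_iff fst_conv snd_conv)
  moreover have "\<omega> x = undefined" if "x \<notin> {1..n} \<times> {1..n}" for x
    using PiE_arb[OF assms(2)[unfolded gauss_matrix_space_eq space_PiM] that] .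
  ultimately show "curry (permute_rows n \<pi> \<omega>) a b = curry \<omega> (\<pi> a) b"
    unfolding permute_rows_def curry_conv restrict_def by (simp only: fst_conv snd_conv) metis
qed

lemma nn_integral_gs_sq_error_row_eq:
  assumes "i \<in> {1..n}" "i' \<in> {1..n}" "j \<in> {1..n}"
  shows "(\<integral>\<^sup>+ \<omega>. gs_sq_error n \<omega> i j \<partial>gauss_matrix_space n)
    = (\<integral>\<^sup>+ \<omega>. gs_sq_error n \<omega> i' j \<partial>gauss_matrix_space n)"
proof -
  let ?\<pi> = "Transposition.transpose i' i" and ?M = "gauss_matrix_space n"
  have \<pi>: "?\<pi> permutes {1..n}"
    using assms by (intro permutes_swap_id)
  have measurable: "(\<lambda>\<omega>. ennreal (gs_sq_error n \<omega> i' j)) \<in> borel_measurable ?M"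
    using assms unfolding gauss_matrix_space_eq
    by (intro measurable_compose[OF borel_measurable_gs_sq_error measurable_ennreal]) auto
  have "gs_sq_error n (permute_rows n ?\<pi> \<omega>) i' j = gs_sq_error n \<omega> i j" if "\<omega> \<in> space ?M" for \<omega>
  proof -
    have "gs_vec n (curry (permute_rows n ?\<pi> \<omega>)) j = (\<lambda>a. gs_vec n (curry \<omega>) j (?\<pi> a))"
      unfolding curry_permute_rows[OF \<pi> that] using assms
      by (intro gs_vec_permute_rows permutes_imp_bij[OF \<pi>]) auto
    then show ?thesis using assms by (simp add: gs_sq_error_def permute_rows_def)
  qed
  note key = this
  have "(\<integral>\<^sup>+ \<omega>. gs_sq_error n \<omega> i' j \<partial>?M)
      = (\<integral>\<^sup>+ \<omega>. gs_sq_error n \<omega> i' j \<partial>distr ?M ?M (permute_rows n ?\<pi>))"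
    by (simp only: distr_permute_rows[OF \<pi>])
  also have "\<dots> = (\<integral>\<^sup>+ \<omega>. gs_sq_error n (permute_rows n ?\<pi> \<omega>) i' j \<partial>?M)"
    by (rule nn_integral_distr[OF measurable_permute_rows[OF \<pi>]])
      (simp only: distr_permute_rows[OF \<pi>] measurable)
  also have "\<dots> = (\<integral>\<^sup>+ \<omega>. gs_sq_error n \<omega> i j \<partial>?M)"
    by (intro nn_integral_cong) (simp add: key)
  finally show ?thesis ..
qed

lemma nn_integral_gauss_matrix_split_column:
  assumes j: "j \<in> {1..n}" and f: "f \<in> borel_measurable (gauss_matrix_space n)"
  shows "integral\<^sup>N (gauss_matrix_space n) f
    = (\<integral>\<^sup>+ x. (\<integral>\<^sup>+ y. f (merge ({1..n} \<times> ({1..n} - {j})) ({1..n} \<times> {j}) (x, y))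
          \<partial>PiM ({1..n} \<times> {j}) (\<lambda>_. std_normal))
        \<partial>PiM ({1..n} \<times> ({1..n} - {j})) (\<lambda>_. std_normal))"
proof -
  have disjoint: "{1..n} \<times> ({1..n} - {j}) \<inter> {1..n} \<times> {j} = {}"
    by auto
  have union: "{1..n} \<times> ({1..n} - {j}) \<union> {1..n} \<times> {j} = {1..n} \<times> {1..n}"
    using j by auto
  show ?thesis
    using std_normal_product.product_nn_integral_fold[OF disjoint _ _, unfolded union,
        OF _ _ f[unfolded gauss_matrix_space_eq]]
    by (simp add: gauss_matrix_space_eq)
qed

lemma sum_column_index: "(\<Sum>x\<in>{1..n} \<times> {j}. g x) = (\<Sum>a=1..n. g (a, j))"
proof -
  have "{1..n} \<times> {j} = (\<lambda>a. (a, j)) ` {1..n}" by auto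
  then show ?thesis by (simp add: sum.reindex inj_on_def)
qed

lemma borel_measurable_inner_col_col:
  "(\<lambda>\<omega>. inner_n n (col (curry \<omega>) j) (col (curry \<omega>) j)) \<in> borel_measurable (gauss_matrix_space n)"
  unfolding gauss_matrix_space_eq
  by (intro borel_measurable_inner_n) (simp_all add: col_def borel_measurable_PiM_std_normal_component)

lemma borel_measurable_inner_col_gs_vec:
  "1 \<le> k \<Longrightarrow>
    (\<lambda>\<omega>. inner_n n (col (curry \<omega>) j) (gs_vec n (curry \<omega>) k)) \<in> borel_measurable (gauss_matrix_space n)"
  unfolding gauss_matrix_space_eq
  by (intro borel_measurable_inner_n borel_measurable_gs_vec)
    (simp_all add: col_def borel_measurable_PiM_std_normal_component)

lemma nn_integral_column_norm_deviation:
  assumes j: "j \<in> {1..n}"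
  shows "(\<integral>\<^sup>+ \<omega>. ennreal ((real n - inner_n n (col (curry \<omega>) j) (col (curry \<omega>) j))\<^sup>2)
      \<partial>gauss_matrix_space n) = ennreal (2 * real n)"
proof -
  let ?R = "{1..n} \<times> ({1..n} - {j})" and ?C = "{1..n} \<times> {j}"
  let ?f = "\<lambda>\<omega>. ennreal ((real n - inner_n n (col (curry \<omega>) j) (col (curry \<omega>) j))\<^sup>2)"
  interpret R: prob_space "PiM ?R (\<lambda>_. std_normal)"
    by (intro prob_space_PiM prob_space_std_normal)
  have inner: "inner_n n (col (curry (merge ?R ?C (x, y))) j) (col (curry (merge ?R ?C (x, y))) j)
      = (\<Sum>p\<in>?C. (y p)\<^sup>2)" for x y
    unfolding inner_n_def col_def sum_column_index by (simp add: merge_def power2_eq_square)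
  have "card ?C = n"
    by (simp add: card_cartesian_product)
  then have deviation: "(\<integral>\<^sup>+ y. ennreal ((real n - (\<Sum>p\<in>?C. (y p)\<^sup>2))\<^sup>2) \<partial>PiM ?C (\<lambda>_. std_normal))
      = ennreal (2 * real n)"
    using nn_integral_PiM_std_normal_sum_sq_deviation[of ?C] by simp
  have "?f \<in> borel_measurable (gauss_matrix_space n)"
    by (intro measurable_compose[OF _ measurable_ennreal] borel_measurable_power
        borel_measurable_diff borel_measurable_const borel_measurable_inner_col_col)
  then have "integral\<^sup>N (gauss_matrix_space n) ?f
      = (\<integral>\<^sup>+ x. (\<integral>\<^sup>+ y. ?f (merge ?R ?C (x, y)) \<partial>PiM ?C (\<lambda>_. std_normal)) \<partial>PiM ?R (\<lambda>_. std_normal))"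
    by (rule nn_integral_gauss_matrix_split_column[OF j])
  also have "\<dots> = (\<integral>\<^sup>+ x. ennreal (2 * real n) \<partial>PiM ?R (\<lambda>_. std_normal))"
    by (simp only: inner deviation)
  also have "\<dots> = ennreal (2 * real n)"
    by (simp only: nn_integral_const R.emeasure_space_1 mult_1_right)
  finally show ?thesis .
qed

text \<open>The vector \<open>\<gamma>\<^sub>k\<close> depends only on the first \<open>k < j\<close> columns, so conditionally on them
  \<open>\<langle>y\<^sub>j, \<gamma>\<^sub>k\<rangle>\<close> is a centred Gaussian with variance \<open>\<parallel>\<gamma>\<^sub>k\<parallel>\<^sup>2 \<le> 1\<close>.\<close>

lemma nn_integral_column_inner_gs_vec_sq_le:
  assumes k: "1 \<le> k" "k < j" and j: "j \<in> {1..n}"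
  shows "(\<integral>\<^sup>+ \<omega>. ennreal ((inner_n n (col (curry \<omega>) j) (gs_vec n (curry \<omega>) k))\<^sup>2)
      \<partial>gauss_matrix_space n) \<le> 1"
proof -
  let ?R = "{1..n} \<times> ({1..n} - {j})" and ?C = "{1..n} \<times> {j}"
  let ?f = "\<lambda>\<omega>. ennreal ((inner_n n (col (curry \<omega>) j) (gs_vec n (curry \<omega>) k))\<^sup>2)"
  interpret R: prob_space "PiM ?R (\<lambda>_. std_normal)"
    by (intro prob_space_PiM prob_space_std_normal)
  have conditional: "(\<integral>\<^sup>+ y. ?f (merge ?R ?C (x, y)) \<partial>PiM ?C (\<lambda>_. std_normal))
      = ennreal (inner_n n (gs_vec n (curry x) k) (gs_vec n (curry x) k))" for x
  proof -
    let ?g = "gs_vec n (curry x) k"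
    have "gs_vec n (curry (merge ?R ?C (x, y))) k a = ?g a" if "a \<in> {1..n}" for a y
      using k j that by (intro gs_vec_cong[where k = k]) (auto simp: merge_def)
    then have "inner_n n (col (curry (merge ?R ?C (x, y))) j) (gs_vec n (curry (merge ?R ?C (x, y))) k)
        = (\<Sum>p\<in>?C. ?g (fst p) * y p)" for y
      unfolding inner_n_def col_def sum_column_index by (intro sum.cong) (auto simp: merge_def)
    then have "(\<integral>\<^sup>+ y. ?f (merge ?R ?C (x, y)) \<partial>PiM ?C (\<lambda>_. std_normal))
        = ennreal (\<Sum>p\<in>?C. (?g (fst p))\<^sup>2)"
      by (simp only: nn_integral_PiM_std_normal_linear_sq finite_SigmaI finite_atLeastAtMost
          finite.emptyI finite_insert)
    also have "(\<Sum>p\<in>?C. (?g (fst p))\<^sup>2) = inner_n n ?g ?g"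
      unfolding sum_column_index inner_n_def by (simp add: power2_eq_square)
    finally show ?thesis .
  qed
  have "?f \<in> borel_measurable (gauss_matrix_space n)"
    using k by (intro measurable_compose[OF _ measurable_ennreal] borel_measurable_power
        borel_measurable_inner_col_gs_vec) simp
  then have "integral\<^sup>N (gauss_matrix_space n) ?f
      = (\<integral>\<^sup>+ x. ennreal (inner_n n (gs_vec n (curry x) k) (gs_vec n (curry x) k)) \<partial>PiM ?R (\<lambda>_. std_normal))"
    by (simp only: nn_integral_gauss_matrix_split_column[OF j] conditional)
  also have "\<dots> \<le> (\<integral>\<^sup>+ x. 1 \<partial>PiM ?R (\<lambda>_. std_normal))"
    using k by (intro nn_integral_mono) (simp add: unit_or_zero_inner_self_le gs_vec_unit_or_zero)
  also have "\<dots> = 1"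
    by (simp only: nn_integral_const R.emeasure_space_1 mult_1_right)
  finally show ?thesis .
qed

lemma ennreal_column_sq_error_le:
  fixes \<omega> :: "nat \<times> nat \<Rightarrow> real" and n j k :: nat
  assumes "j = Suc k" and "1 \<le> n"
  defines "A \<equiv> inner_n n (col (curry \<omega>) j) (col (curry \<omega>) j)"
    and "c \<equiv> \<lambda>l. inner_n n (col (curry \<omega>) j) (gs_vec n (curry \<omega>) l)"
  shows "ennreal (\<Sum>i=1..n. gs_sq_error n \<omega> i j)
    \<le> ennreal (2 / real n) * ennreal ((real n - A)\<^sup>2) + 3 * (\<Sum>l=1..k. ennreal ((c l)\<^sup>2))"
proof -
  have "ennreal (\<Sum>i=1..n. gs_sq_error n \<omega> i j)
      \<le> ennreal (2 / real n * (real n - A)\<^sup>2 + 3 * (\<Sum>l=1..k. (c l)\<^sup>2))"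
    using gs_column_sq_error_le[of n "curry \<omega>" k] assms
    by (intro ennreal_leI) (simp add: gs_sq_error_def)
  also have "\<dots> = ennreal (2 / real n) * ennreal ((real n - A)\<^sup>2) + 3 * (\<Sum>l=1..k. ennreal ((c l)\<^sup>2))"
    by (simp add: ennreal_plus ennreal_mult' sum_nonneg sum_ennreal flip: ennreal_mult)
  finally show ?thesis .
qed

lemma nn_integral_column_sq_error_le:
  assumes j: "j \<in> {1..n}"
  shows "(\<integral>\<^sup>+ \<omega>. ennreal (\<Sum>i=1..n. gs_sq_error n \<omega> i j) \<partial>gauss_matrix_space n)
    \<le> ennreal (3 * real j + 1)"
proof -
  obtain k where k: "j = Suc k" using j by (cases j) auto
  let ?M = "gauss_matrix_space n"
  let ?A = "\<lambda>\<omega>. inner_n n (col (curry \<omega>) j) (col (curry \<omega>) j)"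
  let ?c = "\<lambda>l \<omega>. inner_n n (col (curry \<omega>) j) (gs_vec n (curry \<omega>) l)"
  have "(\<integral>\<^sup>+ \<omega>. ennreal (\<Sum>i=1..n. gs_sq_error n \<omega> i j) \<partial>?M)
      \<le> (\<integral>\<^sup>+ \<omega>. ennreal (2 / real n) * ennreal ((real n - ?A \<omega>)\<^sup>2)
          + 3 * (\<Sum>l=1..k. ennreal ((?c l \<omega>)\<^sup>2)) \<partial>?M)"
    using j k by (intro nn_integral_mono ennreal_column_sq_error_le) auto
  also have "\<dots> = ennreal (2 / real n) * (\<integral>\<^sup>+ \<omega>. ennreal ((real n - ?A \<omega>)\<^sup>2) \<partial>?M)
      + 3 * (\<Sum>l=1..k. \<integral>\<^sup>+ \<omega>. ennreal ((?c l \<omega>)\<^sup>2) \<partial>?M)"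
  proof -
    have "(\<lambda>\<omega>. ennreal ((?c l \<omega>)\<^sup>2)) \<in> borel_measurable ?M" if "l \<in> {1..k}" for l
      using that by (intro measurable_compose[OF _ measurable_ennreal] borel_measurable_power
          borel_measurable_inner_col_gs_vec) simp
    then have "(\<integral>\<^sup>+ \<omega>. (\<Sum>l=1..k. ennreal ((?c l \<omega>)\<^sup>2)) \<partial>?M)
        = (\<Sum>l=1..k. \<integral>\<^sup>+ \<omega>. ennreal ((?c l \<omega>)\<^sup>2) \<partial>?M)"
      by (rule nn_integral_sum)
    with borel_measurable_inner_col_col[of n j] borel_measurable_inner_col_gs_vec[of _ n j]
    show ?thesis
      by (simp add: nn_integral_add nn_integral_cmult del: sum_ennreal)
  qed
  also have "\<dots> \<le> ennreal (2 / real n) * ennreal (2 * real n) + 3 * (\<Sum>l=1..k. 1)"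
    using j k nn_integral_column_inner_gs_vec_sq_le[of _ j n]
    by (intro add_mono mult_left_mono sum_mono)
      (simp_all add: nn_integral_column_norm_deviation)
  also have "\<dots> = ennreal 4 + ennreal (3 * real k)"
  proof -
    have "ennreal (2 / real n) * ennreal (2 * real n) = ennreal 4"
      using j by (simp flip: ennreal_mult)
    moreover have "3 * (\<Sum>l=1..k. 1) = ennreal (3 * real k)"
      by (simp add: ennreal_mult ennreal_of_nat_eq_real_of_nat)
    ultimately show ?thesis by simp
  qed
  also have "\<dots> = ennreal (3 * real j + 1)"
    using ennreal_plus[of 4 "3 * real k"] by (simp add: k)
  finally show ?thesis .
qed

lemma nn_integral_sum_ennreal:
  assumes "finite I" "\<And>i. i \<in> I \<Longrightarrow> f i \<in> borel_measurable M" "\<And>i x. i \<in> I \<Longrightarrow> 0 \<le> f i x"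
  shows "(\<integral>\<^sup>+ x. ennreal (\<Sum>i\<in>I. f i x) \<partial>M) = (\<Sum>i\<in>I. \<integral>\<^sup>+ x. ennreal (f i x) \<partial>M)"
proof -
  have "(\<integral>\<^sup>+ x. ennreal (\<Sum>i\<in>I. f i x) \<partial>M) = (\<integral>\<^sup>+ x. (\<Sum>i\<in>I. ennreal (f i x)) \<partial>M)"
    using assms(3) by (intro nn_integral_cong) (simp add: sum_ennreal)
  also have "\<dots> = (\<Sum>i\<in>I. \<integral>\<^sup>+ x. ennreal (f i x) \<partial>M)"
    using assms(2) by (intro nn_integral_sum) auto
  finally show ?thesis .
qed

lemma nn_integral_gs_sq_error_le:
  assumes i: "i \<in> {1..n}" and j: "j \<in> {1..n}"
  shows "(\<integral>\<^sup>+ \<omega>. gs_sq_error n \<omega> i j \<partial>gauss_matrix_space n) \<le> ennreal ((3 * real j + 1) / real n)"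
proof -
  let ?M = "gauss_matrix_space n"
  let ?E = "\<integral>\<^sup>+ \<omega>. gs_sq_error n \<omega> i j \<partial>?M"
  have "ennreal (real n) * ?E = (\<Sum>i'\<in>{1..n}. ?E)"
    by (simp add: ennreal_of_nat_eq_real_of_nat)
  also have "\<dots> = (\<Sum>i'\<in>{1..n}. \<integral>\<^sup>+ \<omega>. gs_sq_error n \<omega> i' j \<partial>?M)"
    using i j by (intro sum.cong refl nn_integral_gs_sq_error_row_eq)
  also have "\<dots> = (\<integral>\<^sup>+ \<omega>. ennreal (\<Sum>i'=1..n. gs_sq_error n \<omega> i' j) \<partial>?M)"
    using j unfolding gauss_matrix_space_eq
    by (intro nn_integral_sum_ennreal[symmetric] borel_measurable_gs_sq_error)
      (auto simp: gs_sq_error_def)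
  also have "\<dots> \<le> ennreal (3 * real j + 1)"
    using j by (rule nn_integral_column_sq_error_le)
  finally have column: "ennreal (real n) * ?E \<le> ennreal (3 * real j + 1)" .
  have "?E = ennreal (1 / real n) * (ennreal (real n) * ?E)"
    using j by (simp add: mult.assoc[symmetric] ennreal_mult[symmetric])
  also have "\<dots> \<le> ennreal (1 / real n) * ennreal (3 * real j + 1)"
    by (intro mult_left_mono column) auto
  also have "\<dots> = ennreal ((3 * real j + 1) / real n)"
    by (subst ennreal_mult[symmetric]) auto
  finally show ?thesis .
qed

lemma nn_integral_sum_sum_gs_sq_error:
  "(\<integral>\<^sup>+ \<omega>. ennreal (\<Sum>i=1..p. \<Sum>j=1..q. gs_sq_error n \<omega> i j) \<partial>gauss_matrix_space n)
    = (\<Sum>i=1..p. \<Sum>j=1..q. \<integral>\<^sup>+ \<omega>. gs_sq_error n \<omega> i j \<partial>gauss_matrix_space n)"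
proof -
  have measurable: "(\<lambda>\<omega>. gs_sq_error n \<omega> i j) \<in> borel_measurable (gauss_matrix_space n)"
    if "j \<in> {1..q}" for i j
    using that unfolding gauss_matrix_space_eq by (intro borel_measurable_gs_sq_error) simp
  then have "(\<integral>\<^sup>+ \<omega>. ennreal (\<Sum>i=1..p. \<Sum>j=1..q. gs_sq_error n \<omega> i j) \<partial>gauss_matrix_space n)
      = (\<Sum>i=1..p. \<integral>\<^sup>+ \<omega>. ennreal (\<Sum>j=1..q. gs_sq_error n \<omega> i j) \<partial>gauss_matrix_space n)"
    by (intro nn_integral_sum_ennreal borel_measurable_sum) (auto intro: sum_nonneg gs_sq_error_nonneg)
  also have "\<dots> = (\<Sum>i=1..p. \<Sum>j=1..q. \<integral>\<^sup>+ \<omega>. gs_sq_error n \<omega> i j \<partial>gauss_matrix_space n)"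
    using measurable by (intro sum.cong refl nn_integral_sum_ennreal) (auto intro: gs_sq_error_nonneg)
  finally show ?thesis .
qed

theorem proposition3p5:
  fixes n p q :: nat
  assumes "n \<ge> 2" and "1 \<le> p" and "p \<le> n" and "1 \<le> q" and "q \<le> n"
  shows "(\<integral>\<^sup>+ \<omega>. ennreal (\<Sum>i=1..p. \<Sum>j=1..q.
              (sqrt (real n) * gs_gamma n (\<lambda>i j. \<omega> (i, j)) i j - \<omega> (i, j))\<^sup>2)
            \<partial>gauss_matrix_space n)
         \<le> ennreal (24 * real p * (real q)\<^sup>2 / real n)"
proof -
  let ?M = "gauss_matrix_space n"
  have "(\<integral>\<^sup>+ \<omega>. ennreal (\<Sum>i=1..p. \<Sum>j=1..q.
              (sqrt (real n) * gs_gamma n (\<lambda>i j. \<omega> (i, j)) i j - \<omega> (i, j))\<^sup>2) \<partial>?M)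
      = (\<Sum>i=1..p. \<Sum>j=1..q. \<integral>\<^sup>+ \<omega>. gs_sq_error n \<omega> i j \<partial>?M)"
    unfolding nn_integral_sum_sum_gs_sq_error[symmetric]
    by (simp add: gs_sq_error_def gs_gamma_eq_gs_vec curry_def)
  also have "\<dots> \<le> (\<Sum>i=1..p. \<Sum>j=1..q. ennreal ((3 * real j + 1) / real n))"
    using assms by (intro sum_mono nn_integral_gs_sq_error_le) auto
  also have "\<dots> \<le> (\<Sum>i=1..p. \<Sum>j=1..q. ennreal (4 * real q / real n))"
    by (intro sum_mono ennreal_leI divide_right_mono) auto
  also have "\<dots> = ennreal (4 * real p * (real q)\<^sup>2 / real n)"
    by (simp add: ennreal_of_nat_eq_real_of_nat power2_eq_square flip: ennreal_mult)
  also have "\<dots> \<le> ennreal (24 * real p * (real q)\<^sup>2 / real n)"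
    by (intro ennreal_leI divide_right_mono mult_right_mono) auto
  finally show ?thesis .
qed

end
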